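(* Let $1\le k\le m$ and let $\nu$ be any permutation of $[k]$. Then: (1) $W_\nu^m(x)=x$ for all $x\in S_{k,m}$. (2) The orbit structure of $W_\nu$ on $S_{k,m}$ equals the orbit structure of cyclic rotation $A\mapsto\{v+1 \bmod m: v\in A\}$ (residues taken in $\{1,\dots,m\}$) acting on the $k$-element subsets of $[m]$ (equivalently, of rotation on 2-colored necklaces with $k$ white and $m-k$ black beads); in particular it does not depend on $\nu$. (3) For $1\le i\le k$, $1\le j\le m$ let $g_{i,j}(x)=1$ if $x_i=j$ and $0$ otherwise. Then each $d_{i,j}=g_{i,j}-g_{k+1-i,\,m+1-j}$ is $0$-mesic for $W_\nu$ on $S_{k,m}$. For $1\le j\le m$ let $f_j(x)=1$ if $j\in\{x_1,\dots,x_k\}$ and $0$ otherwise; then $f_j$ is homomesic for $W_\nu$ on $S_{k,m}$ with average $k/m$ along every orbit. Hence any real linear combination of the $d_{i,j}$ and $f_j$ is homomesic.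
   Context: $S_{k,m}$ is the set of integer $k$-tuples $x=(x_1,\dots,x_k)$ with $0<x_1<\dots<x_k<m+1$. Winching on index $i$: $W_i(x)=y$ with $y_j=x_j$ for $j\ne i$, $y_i=x_i+1$ if $x_i+1<x_{i+1}$, and $y_i=x_{i-1}+1$ otherwise, with conventions $x_0=0$, $x_{k+1}=m+1$. For a permutation $\nu$ of $[k]$, $W_\nu=W_{\nu(k)}\circ W_{\nu(k-1)}\circ\cdots\circ W_{\nu(1)}$. A function on a finite set with a permutation $\tau$ is homomesic if its average over every $\tau$-orbit is the same constant, and $0$-mesic if that constant is $0$. *)

theory Defs
  imports Complex_Main "HOL-Library.Multiset" "HOL-Combinatorics.Permutations"
begin

text \<open>A tuple x = (x_1,...,x_k) is represented as a list xs with x_i = xs ! (i-1).\<close>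

definition S :: "nat \<Rightarrow> nat \<Rightarrow> nat list set" where
  "S k m = {xs. length xs = k \<and> sorted_wrt (<) xs \<and> (\<forall>v\<in>set xs. 0 < v \<and> v < m + 1)}"

definition entry :: "nat \<Rightarrow> nat \<Rightarrow> nat list \<Rightarrow> nat \<Rightarrow> nat" where
  "entry k m xs j = (if j = 0 then 0 else if j = k + 1 then m + 1 else xs ! (j - 1))"

definition winch :: "nat \<Rightarrow> nat \<Rightarrow> nat \<Rightarrow> nat list \<Rightarrow> nat list" where
  "winch k m i xs =
     xs[i - 1 := (if entry k m xs i + 1 < entry k m xs (i + 1)
                  then entry k m xs i + 1 else entry k m xs (i - 1) + 1)]"

text \<open>W_nu = W_(nu k) o ... o W_(nu 1): apply W_(nu 1) first.\<close>
definition winch_perm :: "nat \<Rightarrow> nat \<Rightarrow> (nat \<Rightarrow> nat) \<Rightarrow> nat list \<Rightarrow> nat list" where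
  "winch_perm k m \<nu> xs = fold (\<lambda>i. winch k m (\<nu> i)) [1..<k + 1] xs"

definition rot :: "nat \<Rightarrow> nat set \<Rightarrow> nat set" where
  "rot m A = (\<lambda>v. v mod m + 1) ` A"

definition orbit :: "('a \<Rightarrow> 'a) \<Rightarrow> 'a \<Rightarrow> 'a set" where
  "orbit f x = {(f ^^ n) x | n. True}"

definition orbit_structure :: "('a \<Rightarrow> 'a) \<Rightarrow> 'a set \<Rightarrow> nat multiset" where
  "orbit_structure f A = image_mset card (mset_set (orbit f ` A))"

definition orbit_avg :: "('a \<Rightarrow> 'a) \<Rightarrow> ('a \<Rightarrow> real) \<Rightarrow> 'a \<Rightarrow> real" where
  "orbit_avg f g x = (\<Sum>y\<in>orbit f x. g y) / real (card (orbit f x))"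

definition homomesic_with :: "'a set \<Rightarrow> ('a \<Rightarrow> 'a) \<Rightarrow> ('a \<Rightarrow> real) \<Rightarrow> real \<Rightarrow> bool" where
  "homomesic_with A f g c \<longleftrightarrow> (\<forall>x\<in>A. orbit_avg f g x = c)"

definition homomesic :: "'a set \<Rightarrow> ('a \<Rightarrow> 'a) \<Rightarrow> ('a \<Rightarrow> real) \<Rightarrow> bool" where
  "homomesic A f g \<longleftrightarrow> (\<exists>c. homomesic_with A f g c)"

definition gfun :: "nat \<Rightarrow> nat \<Rightarrow> nat list \<Rightarrow> real" where
  "gfun i j xs = (if xs ! (i - 1) = j then 1 else 0)"

definition dfun :: "nat \<Rightarrow> nat \<Rightarrow> nat \<Rightarrow> nat \<Rightarrow> nat list \<Rightarrow> real" where
  "dfun k m i j xs = gfun i j xs - gfun (k + 1 - i) (m + 1 - j) xs"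

definition ffun :: "nat \<Rightarrow> nat list \<Rightarrow> real" where
  "ffun j xs = (if j \<in> set xs then 1 else 0)"

end

theory Submission
  imports Defs
begin

(* Write W_L for the composite of the winches W_(L!0), W_(L!1), ... in this order.
   (1) Winches with non-adjacent indices commute, and conjugating W_(a#L') by W_a turns it
       into W_(L'@[a]).  Starting from any ordering L of {1..k}, these two moves reach the
       descending word [k,...,1], so W_L is conjugate, by a bijection of S k m, to the
       descending composite.  Conjugation by W_a also preserves, up to a cyclic shift of
       time, every sum over m consecutive steps of the position statistics g_(i,j).
   (2) The descending composite winches x_k first, then x_(k-1), ...; on the underlying sets
       it is exactly the cyclic rotation v |-> v mod m + 1, so it has period m and the
       tuple <-> set bijection carries its orbits onto rotation orbits of k-subsets.
   (3) For the rotation, elementary counting along an orbit shows that position j is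
       occupied k times in m steps, and that "the i-th element sits at j" happens as often as
       "the (k+1-i)-th element sits at m+1-j" (a flow-balance argument on a window).
   (4) For a map of period m the orbit average equals the average over m steps. *)

lemma entry_0 [simp]: "entry k m xs 0 = 0"
  by (simp add: entry_def)

lemma entry_top [simp]: "entry k m xs (Suc k) = m + 1"
  by (simp add: entry_def)

lemma chain_less:
  assumes "\<forall>j\<le>k. f j < (f (Suc j) :: nat)" "a < b" "b \<le> Suc k"
  shows "f a < f b"
  using assms(2,3)
proof (induction b)
  case (Suc b)
  show ?case
  proof (cases "a = b")
    case False
    then have "f a < f b" using Suc by auto
    also have "f b < f (Suc b)" using assms(1) Suc by auto
    finally show ?thesis .
  qed (use assms(1) Suc in auto)
qed simp

lemma S_iff_entry_chain:
  "xs \<in> S k m \<longleftrightarrow> length xs = k \<and> (\<forall>j\<le>k. entry k m xs j < entry k m xs (Suc j))"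
proof
  assume "xs \<in> S k m"
  then have l: "length xs = k" and s: "sorted_wrt (<) xs" and b: "\<forall>v\<in>set xs. 0 < v \<and> v < m + 1"
    by (auto simp: S_def)
  have "entry k m xs j < entry k m xs (Suc j)" if "j \<le> k" for j
  proof -
    consider "j = 0" "k = 0" | "j = 0" "k > 0" | "j > 0" "j = k" | "j > 0" "j < k"
      using \<open>j \<le> k\<close> by linarith
    then show ?thesis
    proof cases
      case 1 then show ?thesis by simp
    next
      case 2 then show ?thesis using b l by (auto simp: entry_def)
    next
      case 3 then show ?thesis using b l by (auto simp: entry_def)
    next
      case 4 then show ?thesis using s l by (auto simp: entry_def sorted_wrt_iff_nth_less)
    qed
  qed
  then show "length xs = k \<and> (\<forall>j\<le>k. entry k m xs j < entry k m xs (Suc j))" using l by auto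
next
  assume "length xs = k \<and> (\<forall>j\<le>k. entry k m xs j < entry k m xs (Suc j))"
  then have l: "length xs = k" and c: "\<forall>j\<le>k. entry k m xs j < entry k m xs (Suc j)" by auto
  have s: "sorted_wrt (<) xs"
    unfolding sorted_wrt_iff_nth_Suc_transp[OF transp_on_less]
  proof (intro allI impI)
    fix i assume i: "Suc i < length xs"
    then have "entry k m xs (Suc i) < entry k m xs (Suc (Suc i))" using c l by auto
    then show "xs ! i < xs ! Suc i" using i l by (simp add: entry_def)
  qed
  have "0 < v \<and> v < m + 1" if "v \<in> set xs" for v
  proof -
    obtain p where p: "p < k" "v = xs ! p" using \<open>v \<in> set xs\<close> l by (auto simp: in_set_conv_nth)
    have "entry k m xs 0 < entry k m xs (Suc p)" by (rule chain_less[OF c]) (use p in auto)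
    moreover have "entry k m xs (Suc p) < entry k m xs (Suc k)"
      by (rule chain_less[OF c]) (use p in auto)
    ultimately show ?thesis using p by (simp add: entry_def)
  qed
  then show "xs \<in> S k m" using l s by (auto simp: S_def)
qed

lemma S_nthD:
  assumes "y \<in> S k m"
  shows "length y = k" "\<And>p q. p < q \<Longrightarrow> q < k \<Longrightarrow> y!p < y!q"
    "\<And>p. p < k \<Longrightarrow> 1 \<le> y!p \<and> y!p \<le> m"
proof -
  show "length y = k" using assms by (auto simp: S_def)
  show "\<And>p q. p < q \<Longrightarrow> q < k \<Longrightarrow> y!p < y!q"
    using assms by (auto simp: S_def sorted_wrt_iff_nth_less)
  show "1 \<le> y!p \<and> y!p \<le> m" if "p < k" for p
  proof -
    have "y!p \<in> set y" using that assms by (auto simp: S_def)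
    then show ?thesis using assms by (auto simp: S_def)
  qed
qed

lemma finite_S: "finite (S k m)"
proof (rule finite_subset)
  show "S k m \<subseteq> {xs. set xs \<subseteq> {0..m} \<and> length xs = k}" by (auto simp: S_def)
qed (rule finite_lists_length_eq, simp)

lemma S_sorted_distinct: "xs \<in> S k m \<Longrightarrow> sorted xs \<and> distinct xs"
  by (auto simp: S_def strict_sorted_iff)

lemma S_eq_if_set_eq: "xs \<in> S k m \<Longrightarrow> ys \<in> S k m \<Longrightarrow> set xs = set ys \<Longrightarrow> xs = ys"
  using S_sorted_distinct sorted_distinct_set_unique by metis

lemma S_set: assumes "xs \<in> S k m" shows "set xs \<subseteq> {1..m}" "card (set xs) = k"
  using assms by (auto simp: S_def distinct_card strict_sorted_iff Suc_le_eq)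

lemma bij_betw_set_S: "bij_betw set (S k m) {A. A \<subseteq> {1..m} \<and> card A = k}"
proof (rule bij_betw_imageI)
  show "inj_on set (S k m)" using S_eq_if_set_eq by (meson inj_onI)
  show "set ` S k m = {A. A \<subseteq> {1..m} \<and> card A = k}"
  proof
    show "{A. A \<subseteq> {1..m} \<and> card A = k} \<subseteq> set ` S k m"
    proof
      fix A assume A: "A \<in> {A. A \<subseteq> {1..m} \<and> card A = k}"
      then have fin: "finite A" using finite_subset by blast
      then have "sorted_list_of_set A \<in> S k m" using A by (auto simp: S_def Suc_le_eq)
      moreover have "set (sorted_list_of_set A) = A" using fin by simp
      ultimately show "A \<in> set ` S k m" by force
    qed
  qed (use S_set in blast)
qed

lemma card_le_nth_S:
  assumes xs: "xs \<in> S k m" and q: "q < k"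
  shows "card {v\<in>set xs. v \<le> xs!q} = Suc q"
proof -
  note F = S_nthD[OF xs]
  have "{v\<in>set xs. v \<le> xs!q} = (\<lambda>p. xs!p) ` {..q}"
  proof
    show "{v\<in>set xs. v \<le> xs!q} \<subseteq> (\<lambda>p. xs!p) ` {..q}"
    proof
      fix v assume "v \<in> {v\<in>set xs. v \<le> xs!q}"
      then obtain p where p: "p < k" "v = xs!p" "xs!p \<le> xs!q" using F(1) by (auto simp: in_set_conv_nth)
      then have "p \<le> q" using F(2)[of q p] q by (meson leD not_le_imp_less)
      then show "v \<in> (\<lambda>p. xs!p) ` {..q}" using p by auto
    qed
  next
    show "(\<lambda>p. xs!p) ` {..q} \<subseteq> {v\<in>set xs. v \<le> xs!q}"
    proof
      fix v assume "v \<in> (\<lambda>p. xs!p) ` {..q}"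
      then obtain p where p: "p \<le> q" "v = xs!p" by auto
      have "xs!p \<le> xs!q" using F(2)[of p q] p q by (cases "p = q") auto
      then show "v \<in> {v\<in>set xs. v \<le> xs!q}" using p q F(1) by auto
    qed
  qed
  moreover have "inj_on (\<lambda>p. xs!p) {..q}"
  proof (rule inj_onI)
    fix p p' assume "p \<in> {..q}" "p' \<in> {..q}" "xs!p = xs!p'"
    then show "p = p'" using F(2)[of p p'] F(2)[of p' p] q
      by (metis atMost_iff le_less_trans less_irrefl nat_neq_iff)
  qed
  ultimately show ?thesis by (simp add: card_image)
qed

text \<open>The i-th entry equals j iff j is an entry and exactly i entries are at most j;
  this expresses g_(i,j) through the underlying set.\<close>
lemma S_nth_eq_iff_rank:
  assumes xs: "xs \<in> S k m" and i: "1 \<le> i" "i \<le> k"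
  shows "xs!(i-1) = j \<longleftrightarrow> j \<in> set xs \<and> card {v\<in>set xs. v \<le> j} = i"
proof -
  note F = S_nthD[OF xs]
  note rank = card_le_nth_S[OF xs]
  show ?thesis
  proof
    assume "xs!(i-1) = j"
    then show "j \<in> set xs \<and> card {v\<in>set xs. v \<le> j} = i" using rank[of "i-1"] i F(1) by auto
  next
    assume a: "j \<in> set xs \<and> card {v\<in>set xs. v \<le> j} = i"
    then obtain q where q: "q < k" "j = xs!q" using F(1) by (auto simp: in_set_conv_nth)
    then have "Suc q = i" using rank a by simp
    then show "xs!(i-1) = j" using q by auto
  qed
qed

lemma ffun_eq_sum_gfun:
  assumes xs: "xs \<in> S k m" shows "ffun j xs = (\<Sum>i\<in>{1..k}. gfun i j xs)"
proof -
  note F = S_nthD[OF xs]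
  have "(\<Sum>i\<in>{1..k}. gfun i j xs) = real (card ({1..k} \<inter> {i. xs!(i-1) = j}))"
    by (simp add: gfun_def of_bool_def[symmetric] sum_of_bool_eq)
  also have "\<dots> = ffun j xs"
  proof (cases "j \<in> set xs")
    case True
    then obtain q where q: "q < k" "j = xs!q" using F(1) by (auto simp: in_set_conv_nth)
    have "xs!(i-1) = xs!q \<longleftrightarrow> i - 1 = q" if "i \<in> {1..k}" for i
    proof -
      have "i - 1 < k" using that by auto
      then show ?thesis using F(2)[of "i-1" q] F(2)[of q "i-1"] q by (metis less_irrefl nat_neq_iff)
    qed
    then have "{1..k} \<inter> {i. xs!(i-1) = j} = {Suc q}" using q by auto
    then show ?thesis using True by (simp add: ffun_def)
  next
    case False
    have "{1..k} \<inter> {i. xs!(i-1) = j} = {}"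
    proof (rule ccontr)
      assume "{1..k} \<inter> {i. xs!(i-1) = j} \<noteq> {}"
      then obtain i where i: "i \<in> {1..k}" "xs!(i-1) = j" by blast
      then have "i - 1 < length xs" using F(1) by auto
      then show False using False i(2) nth_mem by metis
    qed
    then show ?thesis using False by (simp add: ffun_def)
  qed
  finally show ?thesis by simp
qed

lemma length_winch [simp]: "length (winch k m i xs) = length xs"
  by (simp add: winch_def)

lemma winch_nth_other: "p \<noteq> i \<Longrightarrow> 1 \<le> p \<Longrightarrow> 1 \<le> i \<Longrightarrow> winch k m i xs ! (p-1) = xs ! (p-1)"
  by (simp add: winch_def)

lemma entry_update_other: "j \<noteq> b \<Longrightarrow> 1 \<le> b \<Longrightarrow> entry k m (xs[b-1 := v]) j = entry k m xs j"
  by (simp add: entry_def)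

text \<open>The new value of x_i lies strictly between x_(i-1) and x_(i+1), so W_i preserves S k m.\<close>
lemma winch_in_S:
  assumes "xs \<in> S k m" "1 \<le> i" "i \<le> k"
  shows "winch k m i xs \<in> S k m"
proof -
  from assms(1) have l: "length xs = k" and c: "\<forall>j\<le>k. entry k m xs j < entry k m xs (Suc j)"
    by (auto simp: S_iff_entry_chain)
  define v where "v = (if entry k m xs i + 1 < entry k m xs (i + 1)
                  then entry k m xs i + 1 else entry k m xs (i - 1) + 1)"
  have w: "winch k m i xs = xs[i-1 := v]" by (simp add: winch_def v_def)
  have "entry k m xs (i-1) < entry k m xs i" "entry k m xs i < entry k m xs (Suc i)"
    using c[rule_format, of "i-1"] c[rule_format, of i] assms by auto
  then have lo: "entry k m xs (i-1) < v" and hi: "v < entry k m xs (Suc i)"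
    by (auto simp: v_def)
  have e: "entry k m (xs[i-1:=v]) j = (if j = i then v else entry k m xs j)" for j
    using assms l by (simp add: entry_def)
  have "entry k m (xs[i-1:=v]) j < entry k m (xs[i-1:=v]) (Suc j)" if "j \<le> k" for j
  proof -
    consider "Suc j = i" | "j = i" | "j \<noteq> i" "Suc j \<noteq> i" by auto
    then show ?thesis
    proof cases
      case 1 then show ?thesis using lo e by auto
    next
      case 2 then show ?thesis using hi e by simp
    next
      case 3 then show ?thesis using e c that by simp
    qed
  qed
  then show ?thesis using l w by (simp add: S_iff_entry_chain)
qed

text \<open>W_i is injective on S k m: the old value of x_i is recovered from the new one.\<close>
lemma winch_cancel:
  assumes "xs \<in> S k m" "ys \<in> S k m" "1 \<le> i" "i \<le> k"
    and eq: "winch k m i xs = winch k m i ys"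
  shows "xs = ys"
proof -
  have lx: "length xs = k" and ly: "length ys = k" using assms by (auto simp: S_def)
  have oth: "xs ! q = ys ! q" if "q < k" "q \<noteq> i - 1" for q
    using winch_nth_other[of "Suc q" i k m xs] winch_nth_other[of "Suc q" i k m ys] eq that assms
    by auto
  have ee: "entry k m xs j = entry k m ys j" if "j \<noteq> i" "j \<le> Suc k" for j
  proof -
    have "j = 0 \<or> j = Suc k \<or> (0 < j \<and> j - 1 < k \<and> j - 1 \<noteq> i - 1)" using that assms(3) by auto
    then show ?thesis using oth by (auto simp: entry_def)
  qed
  from assms(1,2) have cx: "\<forall>j\<le>k. entry k m xs j < entry k m xs (Suc j)"
    and cy: "\<forall>j\<le>k. entry k m ys j < entry k m ys (Suc j)" by (auto simp: S_iff_entry_chain)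
  define lo where "lo = entry k m xs (i-1)"
  define hi where "hi = entry k m xs (Suc i)"
  have lo': "lo = entry k m ys (i-1)" and hi': "hi = entry k m ys (Suc i)"
    using ee assms by (auto simp: lo_def hi_def)
  define a where "a = entry k m xs i"
  define b where "b = entry k m ys i"
  have ab: "lo < a" "a < hi" "lo < b" "b < hi"
    using cx[rule_format, of "i-1"] cx[rule_format, of i] cy[rule_format, of "i-1"]
      cy[rule_format, of i] assms
    unfolding a_def b_def by (auto simp: lo_def hi_def lo'[symmetric] hi'[symmetric] simp del: One_nat_def)
  have "winch k m i xs ! (i-1) = (if a + 1 < hi then a + 1 else lo + 1)"
    using lx assms(3,4) by (simp add: winch_def a_def lo_def hi_def)
  moreover have "winch k m i ys ! (i-1) = (if b + 1 < hi then b + 1 else lo + 1)"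
    using ly assms(3,4) by (simp add: winch_def b_def lo' hi')
  ultimately have "(if a + 1 < hi then a + 1 else lo + 1) = (if b + 1 < hi then b + 1 else lo + 1)"
    using eq by metis
  then have "a = b" using ab by (auto split: if_splits)
  then have "xs ! (i-1) = ys ! (i-1)" using assms by (simp add: a_def b_def entry_def)
  then show ?thesis using oth lx ly by (metis nth_equalityI)
qed

lemma winch_bij: assumes "1 \<le> a" "a \<le> k" shows "bij_betw (winch k m a) (S k m) (S k m)"
proof -
  have inj: "inj_on (winch k m a) (S k m)"
    using winch_cancel assms by (intro inj_onI) blast
  have "winch k m a ` S k m \<subseteq> S k m" using winch_in_S assms by blast
  then have "winch k m a ` S k m = S k m" by (rule endo_inj_surj[OF finite_S _ inj])
  then show ?thesis using inj by (simp add: bij_betw_def)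
qed

text \<open>Winches on non-adjacent indices commute: each one only reads x_(a-1), x_a, x_(a+1).\<close>
lemma winch_commute:
  assumes "1 \<le> a" "1 \<le> b" "a \<noteq> b" "a \<noteq> Suc b" "b \<noteq> Suc a"
  shows "winch k m a (winch k m b xs) = winch k m b (winch k m a xs)"
proof -
  define va where "va = (if entry k m xs a + 1 < entry k m xs (a + 1)
                  then entry k m xs a + 1 else entry k m xs (a - 1) + 1)"
  define vb where "vb = (if entry k m xs b + 1 < entry k m xs (b + 1)
                  then entry k m xs b + 1 else entry k m xs (b - 1) + 1)"
  have ea: "entry k m (xs[a-1 := va]) j = entry k m xs j" if "j \<in> {b-1, b, b+1}" for j
    using entry_update_other[of j a k m xs va] assms that by auto
  have eb: "entry k m (xs[b-1 := vb]) j = entry k m xs j" if "j \<in> {a-1, a, a+1}" for j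
    using entry_update_other[of j b k m xs vb] assms that by auto
  have "winch k m a (xs[b-1 := vb]) = (xs[b-1 := vb])[a-1 := va]"
    unfolding winch_def va_def using eb by simp
  moreover have "winch k m b (xs[a-1 := va]) = (xs[a-1 := va])[b-1 := vb]"
    unfolding winch_def vb_def using ea by simp
  moreover have "winch k m a xs = xs[a-1 := va]" "winch k m b xs = xs[b-1 := vb]"
    by (simp_all add: winch_def va_def vb_def)
  moreover have "a - 1 \<noteq> b - 1" using assms by auto
  ultimately show ?thesis by (simp add: list_update_swap)
qed

definition winch_word :: "nat \<Rightarrow> nat \<Rightarrow> nat list \<Rightarrow> nat list \<Rightarrow> nat list" where
  "winch_word k m L = fold (winch k m) L"

lemma winch_word_Cons: "winch_word k m (a#L) = winch_word k m L \<circ> winch k m a"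
  by (simp add: winch_word_def fun_eq_iff)

lemma winch_word_snoc: "winch_word k m (L@[a]) = winch k m a \<circ> winch_word k m L"
  by (simp add: winch_word_def fun_eq_iff)

lemma winch_word_append: "winch_word k m (L@M) = winch_word k m M \<circ> winch_word k m L"
  by (simp add: winch_word_def fun_eq_iff)

lemma winch_perm_eq_word: "winch_perm k m \<nu> = winch_word k m (map \<nu> [1..<k+1])"
  by (simp add: winch_perm_def winch_word_def fold_map fun_eq_iff comp_def)

lemma winch_word_in_S: "set L \<subseteq> {1..k} \<Longrightarrow> y \<in> S k m \<Longrightarrow> winch_word k m L y \<in> S k m"
  by (induction L arbitrary: y) (auto simp: winch_word_def winch_in_S)

lemma winch_word_nth_untouched:
  "a \<notin> set L \<Longrightarrow> 1 \<le> a \<Longrightarrow> \<forall>x\<in>set L. 1 \<le> x \<Longrightarrow> winch_word k m L y ! (a-1) = y ! (a-1)"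
proof (induction L arbitrary: y)
  case (Cons b L)
  have "winch_word k m (b#L) y ! (a-1) = winch k m b y ! (a-1)" using Cons by (simp add: winch_word_Cons)
  also have "\<dots> = y ! (a-1)" using Cons.prems by (intro winch_nth_other) auto
  finally show ?case .
qed (simp add: winch_word_def)

section \<open>Moves between orderings\<close>

definition commuting_swap :: "nat list \<Rightarrow> nat list \<Rightarrow> bool" where
  "commuting_swap L M \<longleftrightarrow>
     (\<exists>A B a b. L = A@[a,b]@B \<and> M = A@[b,a]@B \<and> a \<noteq> b \<and> a \<noteq> Suc b \<and> b \<noteq> Suc a)"

definition word_move :: "nat list \<Rightarrow> nat list \<Rightarrow> bool" where
  "word_move L M \<longleftrightarrow> M = rotate1 L \<or> commuting_swap L M"

lemma word_move_preserve: "word_move L M \<Longrightarrow> set M = set L \<and> distinct M = distinct L"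
  unfolding word_move_def commuting_swap_def by auto

lemma word_moves_preserve: "word_move\<^sup>*\<^sup>* L M \<Longrightarrow> set M = set L \<and> distinct M = distinct L"
  by (induction rule: rtranclp_induct) (auto dest: word_move_preserve)

lemma word_moves_rotate: "word_move\<^sup>*\<^sup>* (X@Z) (Z@X)"
proof (induction X arbitrary: Z)
  case (Cons a X)
  have "word_move ((a#X)@Z) (X@(Z@[a]))" by (simp add: word_move_def)
  then show ?case using Cons.IH[of "Z@[a]"] by simp
qed simp

lemma word_moves_to_front:
  "(\<forall>x\<in>set X. x \<noteq> c \<and> x \<noteq> Suc c \<and> c \<noteq> Suc x) \<Longrightarrow> word_move\<^sup>*\<^sup>* (X@c#Z) (c#X@Z)"
proof (induction X arbitrary: Z rule: rev_induct)
  case (snoc x X)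
  have "word_move ((X@[x])@c#Z) (X@[c,x]@Z)"
    unfolding word_move_def commuting_swap_def using snoc.prems
    by (intro disjI2 exI[of _ X] exI[of _ Z]) auto
  moreover have "word_move\<^sup>*\<^sup>* (X@c#(x#Z)) (c#X@(x#Z))" using snoc by auto
  ultimately show ?case by simp
qed simp

lemma word_move_cons_max:
  assumes "word_move L M" "set L \<subseteq> {1..k}" "distinct L"
  shows "word_move\<^sup>*\<^sup>* (Suc k # L) (Suc k # M)"
proof (cases "M = rotate1 L")
  case False
  then obtain A B a b where "L = A@[a,b]@B" "M = A@[b,a]@B" "a \<noteq> b" "a \<noteq> Suc b" "b \<noteq> Suc a"
    using assms(1) by (auto simp: word_move_def commuting_swap_def)
  then have "word_move (Suc k # L) (Suc k # M)" unfolding word_move_def commuting_swap_def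
    by (intro disjI2 exI[of _ "Suc k # A"] exI[of _ B]) auto
  then show ?thesis by simp
next
  case rot: True
  show ?thesis
  proof (cases L)
    case (Cons b L')
    have M: "M = L'@[b]" using rot Cons by simp
    have b: "1 \<le> b" "b \<le> k" using assms Cons by auto
    show ?thesis
    proof (cases "b = k")
      case False
      have "word_move (Suc k # b # L') (b # Suc k # L')" unfolding word_move_def commuting_swap_def
        using b False by (intro disjI2 exI[of _ "[]"] exI[of _ L']) auto
      moreover have "word_move (b # Suc k # L') (Suc k # L' @ [b])" by (simp add: word_move_def)
      ultimately show ?thesis using Cons M by simp
    next
      case True
      have "word_move (Suc k # k # L') (k # L' @ [Suc k])" by (simp add: word_move_def)
      moreover have "word_move (k # L' @ [Suc k]) (L' @ [Suc k, k])" by (simp add: word_move_def)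
      moreover have "word_move\<^sup>*\<^sup>* (L' @ Suc k # [k]) (Suc k # L' @ [k])"
      proof (rule word_moves_to_front, intro ballI)
        fix x assume "x \<in> set L'"
        then have "x \<in> {1..k}" "x \<noteq> k" using assms Cons True by auto
        then show "x \<noteq> Suc k \<and> x \<noteq> Suc (Suc k) \<and> Suc k \<noteq> Suc x" by auto
      qed
      ultimately show ?thesis using Cons M True
        by (metis (no_types, lifting) append_Cons append_Nil converse_rtranclp_into_rtranclp)
    qed
  qed (use rot in simp)
qed

lemma word_moves_cons_max:
  "word_move\<^sup>*\<^sup>* L M \<Longrightarrow> set L \<subseteq> {1..k} \<Longrightarrow> distinct L \<Longrightarrow> word_move\<^sup>*\<^sup>* (Suc k # L) (Suc k # M)"
proof (induction rule: rtranclp_induct)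
  case (step y z)
  have "set y = set L" "distinct y = distinct L" using word_moves_preserve[OF step(1)] by auto
  then have "word_move\<^sup>*\<^sup>* (Suc k # y) (Suc k # z)" using word_move_cons_max[OF step(2)] step by auto
  then show ?case using step by auto
qed simp

lemma word_moves_to_descending:
  "distinct L \<Longrightarrow> set L = {1..k} \<Longrightarrow> word_move\<^sup>*\<^sup>* L (rev [1..<k+1])"
proof (induction k arbitrary: L)
  case (Suc k)
  have "Suc k \<in> set L" using Suc by auto
  then obtain X Y where L: "L = X @ Suc k # Y" by (meson split_list)
  have rotated: "word_move\<^sup>*\<^sup>* L (Suc k # (Y@X))" using word_moves_rotate[of X "Suc k # Y"] L by simp
  have "set L = insert (Suc k) (set (Y@X))" "Suc k \<notin> set (Y@X)" using Suc.prems L by auto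
  then have "set (Y@X) = {1..Suc k} - {Suc k}" using Suc.prems by auto
  also have "\<dots> = {1..k}" by auto
  finally have set_YX: "set (Y@X) = {1..k}" .
  have dist_YX: "distinct (Y@X)" using Suc.prems L by auto
  have "word_move\<^sup>*\<^sup>* (Suc k # (Y@X)) (Suc k # rev [1..<k+1])"
    by (rule word_moves_cons_max[OF Suc.IH[OF dist_YX set_YX]]) (use set_YX dist_YX in simp_all)
  then show ?case using rotated by simp
qed simp

text \<open>The sum of a statistic along m consecutive steps; for a map of period m this is m times
  the orbit average.\<close>
definition period_sum :: "nat \<Rightarrow> ('a \<Rightarrow> 'a) \<Rightarrow> ('a \<Rightarrow> real) \<Rightarrow> 'a \<Rightarrow> real" where
  "period_sum m F g y = (\<Sum>t<m. g ((F ^^ t) y))"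

lemma period_sum_add: "period_sum m F (\<lambda>x. f x + g x) y = period_sum m F f y + period_sum m F g y"
  by (simp add: period_sum_def sum.distrib)

lemma period_sum_diff: "period_sum m F (\<lambda>x. f x - g x) y = period_sum m F f y - period_sum m F g y"
  by (simp add: period_sum_def sum_subtractf)

lemma period_sum_sum: "period_sum m F (\<lambda>x. \<Sum>i\<in>I. f i x) y = (\<Sum>i\<in>I. period_sum m F (f i) y)"
  unfolding period_sum_def by (rule sum.swap)

lemma period_sum_mult: "period_sum m F (\<lambda>x. c * f x) y = c * period_sum m F f y"
  by (simp add: period_sum_def sum_distrib_left)

lemma funpow_in: "(\<And>y. y \<in> X \<Longrightarrow> f y \<in> X) \<Longrightarrow> y \<in> X \<Longrightarrow> (f ^^ n) y \<in> X"
  by (induction n) auto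

lemma sum_shift_periodic1: "(F m :: real) = F 0 \<Longrightarrow> (\<Sum>t<m. F (Suc t)) = (\<Sum>t<m. F t)"
proof -
  assume per: "F m = F 0"
  have "(\<Sum>t<m. F (Suc t)) - (\<Sum>t<m. F t) = (\<Sum>t<m. F (Suc t) - F t)" by (simp add: sum_subtractf)
  also have "\<dots> = 0" using sum_lessThan_telescope[of F m] per by simp
  finally show ?thesis by simp
qed

lemma sum_shift_periodic:
  fixes c :: nat assumes "\<And>t. (F (t + m) :: real) = F t"
  shows "(\<Sum>t<m. F (t + c)) = (\<Sum>t<m. F t)"
proof (induction c)
  case (Suc c)
  have "(\<Sum>t<m. F (Suc t + c)) = (\<Sum>t<m. F (t + c))"
    by (rule sum_shift_periodic1[of "\<lambda>t. F (t + c)"]) (use assms[of c] in \<open>simp add: add.commute\<close>)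
  then show ?case using Suc by simp
qed simp

definition similar_word :: "nat \<Rightarrow> nat \<Rightarrow> (nat list \<Rightarrow> nat list) \<Rightarrow> nat list \<Rightarrow> bool" where
  "similar_word k m G L \<longleftrightarrow> (\<exists>h. bij_betw h (S k m) (S k m)
     \<and> (\<forall>y\<in>S k m. h (winch_word k m L y) = G (h y))
     \<and> (\<forall>y\<in>S k m. \<forall>i\<in>{1..k}. \<forall>j.
          period_sum m (winch_word k m L) (gfun i j) y = period_sum m G (gfun i j) (h y)))"

text \<open>Passing from a#L' to L'@[a] conjugates by W_a and shifts time by one step. For positions
  i other than a nothing changes; at position a, one step of L'@[a] after W_a reads the same
  value as one step of a#L' (the letters of L' do not touch x_a).\<close>
lemma period_sum_rotate_word:
  assumes y: "y \<in> S k m" and per: "(winch_word k m (a#L') ^^ m) y = y"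
    and L: "set (a#L') \<subseteq> {1..k}" "distinct (a#L')" and i: "1 \<le> i"
  shows "period_sum m (winch_word k m (a#L')) (gfun i j) y
       = period_sum m (winch_word k m (L'@[a])) (gfun i j) (winch k m a y)"
proof -
  let ?W = "winch_word k m (a#L')" and ?M = "winch_word k m (L'@[a])" and ?w = "winch k m a"
  have a: "1 \<le> a" using L by auto
  have pw: "(?M ^^ n) (?w z) = ?w ((?W ^^ n) z)" for n z
    by (induction n) (simp_all add: winch_word_Cons winch_word_snoc)
  show ?thesis
  proof (cases "i = a")
    case False
    have "gfun i j (?w z) = gfun i j z" for z
      using winch_nth_other[of i a k m z] False a i by (simp add: gfun_def)
    then show ?thesis by (simp add: period_sum_def pw)
  next
    case True
    have "gfun i j (?w z) = gfun i j (?W z)" for z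
    proof -
      have "\<forall>x\<in>set L'. 1 \<le> x" using L by auto
      then have "winch_word k m L' (?w z) ! (a-1) = ?w z ! (a-1)"
        using winch_word_nth_untouched[of a L' k m "?w z"] L by auto
      then show ?thesis using True by (simp add: gfun_def winch_word_Cons)
    qed
    then have "period_sum m ?M (gfun i j) (?w y) = (\<Sum>t<m. gfun i j ((?W ^^ Suc t) y))"
      by (simp add: period_sum_def pw)
    also have "\<dots> = period_sum m ?W (gfun i j) y" unfolding period_sum_def
      by (rule sum_shift_periodic1) (simp add: per)
    finally show ?thesis by simp
  qed
qed

context
  fixes k m :: nat and G :: "nat list \<Rightarrow> nat list"
  assumes G_in_S: "\<And>y. y \<in> S k m \<Longrightarrow> G y \<in> S k m"
    and G_period: "\<And>y. y \<in> S k m \<Longrightarrow> (G ^^ m) y = y"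
begin

lemma similar_word_period:
  assumes "similar_word k m G L" "set L \<subseteq> {1..k}" "y \<in> S k m"
  shows "(winch_word k m L ^^ m) y = y"
proof -
  obtain h where h: "bij_betw h (S k m) (S k m)" "\<forall>y\<in>S k m. h (winch_word k m L y) = G (h y)"
    using assms by (auto simp: similar_word_def)
  have WS: "\<And>y. y \<in> S k m \<Longrightarrow> winch_word k m L y \<in> S k m" using winch_word_in_S assms by auto
  have "h ((winch_word k m L ^^ n) y) = (G ^^ n) (h y)" for n
    by (induction n) (auto simp: h(2)[rule_format] funpow_in[OF WS assms(3)])
  then have "h ((winch_word k m L ^^ m) y) = h y" using G_period h(1) assms(3) by (auto simp: bij_betw_def)
  moreover have "(winch_word k m L ^^ m) y \<in> S k m" using funpow_in[OF WS assms(3)] .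
  ultimately show ?thesis using h(1) assms(3) by (auto simp: bij_betw_def inj_on_def)
qed

text \<open>Similarity is preserved by undoing a rotation of the word: conjugate h by W_a.\<close>
lemma similar_word_unrotate:
  assumes sim: "similar_word k m G (L'@[a])" and L: "set (a#L') \<subseteq> {1..k}" "distinct (a#L')"
  shows "similar_word k m G (a#L')"
proof -
  let ?W = "winch_word k m (a#L')" and ?M = "winch_word k m (L'@[a])" and ?w = "winch k m a"
  obtain h where h: "bij_betw h (S k m) (S k m)" "\<forall>y\<in>S k m. h (?M y) = G (h y)"
    "\<forall>y\<in>S k m. \<forall>i\<in>{1..k}. \<forall>j. period_sum m ?M (gfun i j) y = period_sum m G (gfun i j) (h y)"
    using sim by (auto simp: similar_word_def)
  have a: "1 \<le> a" "a \<le> k" using L by auto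
  have wS: "\<And>y. y \<in> S k m \<Longrightarrow> ?w y \<in> S k m" using winch_in_S a by auto
  have WS: "\<And>y. y \<in> S k m \<Longrightarrow> ?W y \<in> S k m" using winch_word_in_S L by (metis)
  have MW: "?M (?w y) = ?w (?W y)" for y by (simp add: winch_word_Cons winch_word_snoc)
  have pw: "(?M ^^ n) (?w y) = ?w ((?W ^^ n) y)" for n y by (induction n) (auto simp: MW)
  have per: "(?W ^^ m) y = y" if "y \<in> S k m" for y
  proof -
    have "(?M ^^ m) (?w y) = ?w y" using similar_word_period[OF sim] L wS that by auto
    then have "?w ((?W ^^ m) y) = ?w y" using pw by metis
    then show ?thesis using winch_cancel[OF funpow_in[OF WS that] that a] by auto
  qed
  show ?thesis unfolding similar_word_def
  proof (intro exI[of _ "h \<circ> ?w"] conjI ballI allI)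
    show "bij_betw (h \<circ> ?w) (S k m) (S k m)" using bij_betw_trans winch_bij[OF a] h(1) by blast
  next
    fix y assume y: "y \<in> S k m"
    show "(h \<circ> ?w) (?W y) = G ((h \<circ> ?w) y)" using h(2) MW wS y by (metis comp_apply)
    fix i j assume i: "i \<in> {1..k}"
    show "period_sum m ?W (gfun i j) y = period_sum m G (gfun i j) ((h \<circ> ?w) y)"
      using period_sum_rotate_word[OF y per[OF y] L] h(3) wS[OF y] i by auto
  qed
qed

text \<open>If the descending word is similar to G, so is every ordering of {1..k}: follow the
  moves to the descending word backwards; swaps do not change the composite.\<close>
lemma similar_word_all:
  assumes "similar_word k m G (rev [1..<k+1])" "distinct L" "set L = {1..k}"
  shows "similar_word k m G L"
proof -
  have "word_move\<^sup>*\<^sup>* L (rev [1..<k+1])" using word_moves_to_descending assms by auto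
  then have "distinct L \<and> set L = {1..k} \<longrightarrow> similar_word k m G L"
  proof (induction rule: converse_rtranclp_induct)
    case (step L M)
    show ?case
    proof
      assume d: "distinct L \<and> set L = {1..k}"
      then have sim: "similar_word k m G M" using step word_move_preserve[OF step(1)] by auto
      show "similar_word k m G L"
      proof (cases "M = rotate1 L")
        case True
        show ?thesis
        proof (cases L)
          case (Cons a L')
          then have "similar_word k m G (L'@[a])" using True sim by simp
          moreover have "set (a#L') \<subseteq> {1..k}" "distinct (a#L')" using d Cons by auto
          ultimately show ?thesis using similar_word_unrotate[of L' a] Cons by blast
        qed (use True sim in simp)
      next
        case False
        then obtain A B a b where ab: "L = A@[a,b]@B" "M = A@[b,a]@B"
          "a \<noteq> b" "a \<noteq> Suc b" "b \<noteq> Suc a"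
          using step(1) by (auto simp: word_move_def commuting_swap_def)
        have "1 \<le> a" "1 \<le> b" using ab(1) d by auto
        then have "winch_word k m [a,b] = winch_word k m [b,a]"
          using winch_commute[of a b k m] ab by (simp add: winch_word_def fun_eq_iff)
        then have "winch_word k m L = winch_word k m M" using ab(1,2) by (simp only: winch_word_append)
        then show ?thesis using sim by (simp add: similar_word_def)
      qed
    qed
  qed (use assms in auto)
  then show ?thesis using assms by auto
qed

end

section \<open>Cyclic rotation of subsets of {1..m}\<close>

lemma mod_eq_in_range: "x \<in> {1..m} \<Longrightarrow> x mod (m::nat) = (if x = m then 0 else x)"
  by (cases "x = m") auto

lemma rot_subset: "0 < m \<Longrightarrow> rot m B \<subseteq> {1..m}"
  unfolding rot_def using mod_less_divisor by (auto simp: Suc_leI)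

lemma rot_inj_on: "0 < (m::nat) \<Longrightarrow> inj_on (\<lambda>v. v mod m + 1) {1..m}"
proof (rule inj_onI)
  fix x y assume x: "x \<in> {1..m}" and y: "y \<in> {1..m}" and e: "x mod m + 1 = y mod m + 1"
  have "x mod m = (if x = m then 0 else x)" using x by (rule mod_eq_in_range)
  moreover have "y mod m = (if y = m then 0 else y)" using y by (rule mod_eq_in_range)
  ultimately show "x = y" using e x y by (auto split: if_splits)
qed

lemma card_rot: "0 < m \<Longrightarrow> B \<subseteq> {1..m} \<Longrightarrow> card (rot m B) = card B"
  unfolding rot_def by (rule card_image, rule inj_on_subset[OF rot_inj_on])

lemma rot_mem_iff:
  assumes "0 < m" "B \<subseteq> {1..m}" "w \<in> {1..m}"
  shows "w \<in> rot m B \<longleftrightarrow> (if w = 1 then m \<in> B else w - 1 \<in> B)"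
proof -
  define c where "c = (if w = 1 then m else w - 1)"
  have u: "u mod m + 1 = w \<longleftrightarrow> u = c" if "u \<in> {1..m}" for u
  proof -
    have "u mod m = (if u = m then 0 else u)" using that by (rule mod_eq_in_range)
    then show ?thesis using assms(1,3) that by (auto simp: c_def)
  qed
  have "w \<in> rot m B \<longleftrightarrow> (\<exists>u\<in>B. u mod m + 1 = w)" unfolding rot_def by auto
  also have "\<dots> \<longleftrightarrow> (\<exists>u\<in>B. u = c)" by (rule bex_cong[OF refl]) (use u assms(2) in blast)
  finally show ?thesis by (simp add: c_def)
qed

lemma rot_funpow_subset: "0 < m \<Longrightarrow> A \<subseteq> {1..m} \<Longrightarrow> (rot m ^^ t) A \<subseteq> {1..m}"
proof (induction t)
  case (Suc t) then show ?case using rot_subset[of m] by simp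
qed simp

lemma card_rot_funpow: "0 < m \<Longrightarrow> A \<subseteq> {1..m} \<Longrightarrow> card ((rot m ^^ t) A) = card A"
proof (induction t)
  case (Suc t)
  then show ?case using card_rot[of m "(rot m ^^ t) A"] rot_funpow_subset[of m A t] by simp
qed simp

lemma rot_funpow_shift:
  assumes "0 < m" "A \<subseteq> {1..m}" "1 \<le> v" "v + s \<le> m"
  shows "v + s \<in> (rot m ^^ (t + s)) A \<longleftrightarrow> v \<in> (rot m ^^ t) A"
  using assms(4)
proof (induction s)
  case (Suc s)
  have "v + Suc s \<in> (rot m ^^ (t + Suc s)) A \<longleftrightarrow> v + s \<in> (rot m ^^ (t + s)) A"
    using rot_mem_iff[OF assms(1) rot_funpow_subset[OF assms(1,2)], of "v + Suc s" "t + s"] assms Suc.prems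
    by simp
  then show ?case using Suc by auto
qed simp

lemma rot_funpow_period: assumes "0 < m" "A \<subseteq> {1..m}" shows "(rot m ^^ m) A = A"
proof -
  have "v \<in> (rot m ^^ m) A \<longleftrightarrow> v \<in> A" if v: "v \<in> {1..m}" for v
  proof -
    have "v \<in> (rot m ^^ m) A \<longleftrightarrow> 1 + (v - 1) \<in> (rot m ^^ ((m - v + 1) + (v - 1))) A"
      using v by simp
    also have "\<dots> \<longleftrightarrow> 1 \<in> rot m ((rot m ^^ (m - v)) A)"
      by (subst rot_funpow_shift) (use assms v in auto)
    also have "\<dots> \<longleftrightarrow> v + (m - v) \<in> (rot m ^^ (0 + (m - v))) A"
      using rot_mem_iff[OF assms(1) rot_funpow_subset[OF assms]] assms v by simp
    also have "\<dots> \<longleftrightarrow> v \<in> A" by (subst rot_funpow_shift) (use assms v in auto)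
    finally show ?thesis .
  qed
  then show ?thesis using rot_funpow_subset[OF assms, of m] assms(2) by blast
qed

section \<open>The descending word acts as rotation\<close>

definition winch_desc :: "nat \<Rightarrow> nat \<Rightarrow> nat list \<Rightarrow> nat list" where
  "winch_desc k m = winch_word k m (rev [1..<k+1])"

text \<open>The value of x_(p+1) after the descending sweep: if x_k < m, every entry moves up by one;
  otherwise each entry jumps to one more than its left neighbour (x_1 becomes 1).\<close>
definition rotated_entry :: "nat \<Rightarrow> nat \<Rightarrow> nat list \<Rightarrow> nat \<Rightarrow> nat" where
  "rotated_entry k m y p = (if y!(k-1) < m then y!p + 1 else entry k m y p + 1)"

text \<open>The state after winching positions k, k-1, ..., s: positions \<ge> s are already rotated.\<close>
definition sweep_state :: "nat \<Rightarrow> nat \<Rightarrow> nat list \<Rightarrow> nat \<Rightarrow> nat list" where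
  "sweep_state k m y s = map (\<lambda>p. if p+1 < s then y!p else rotated_entry k m y p) [0..<k]"

text \<open>When W_s acts after positions s+1..k have been rotated, it computes the rotated value of x_s:
  if x_k < m there is room above x_s, otherwise x_s falls back to one more than x_(s-1).\<close>
lemma sweep_new_value:
  assumes y: "y \<in> S k m" and s: "1 \<le> s" "s \<le> k"
  shows "(if y!(s-1) + 1 < entry k m (sweep_state k m y (Suc s)) (Suc s)
          then y!(s-1) + 1 else entry k m y (s-1) + 1) = rotated_entry k m y (s-1)"
proof -
  note F = S_nthD[OF y]
  let ?Z = "sweep_state k m y (Suc s)"
  have e2: "entry k m ?Z (Suc s) = (if s = k then m+1 else rotated_entry k m y s)"
    using s by (simp add: entry_def sweep_state_def)
  have top: "y!(k-1) \<le> m" using F(3)[of "k-1"] s by auto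
  show ?thesis
  proof (cases "y!(k-1) < m")
    case True
    have "y!(s-1) + 1 < entry k m ?Z (Suc s)"
    proof (cases "s = k")
      case False
      then have "y!(s-1) < y!s" using F(2)[of "s-1" s] s by auto
      then show ?thesis using e2 False True by (simp add: rotated_entry_def)
    qed (use e2 True in simp)
    then show ?thesis using True by (simp add: rotated_entry_def)
  next
    case False
    then have ym: "y!(k-1) = m" using top by auto
    have "entry k m ?Z (Suc s) = y!(s-1) + 1"
    proof (cases "s = k")
      case False then show ?thesis using e2 ym s by (simp add: rotated_entry_def entry_def)
    qed (use e2 ym in simp)
    then show ?thesis using ym by (simp add: rotated_entry_def)
  qed
qed

lemma winch_sweep_step:
  assumes y: "y \<in> S k m" and s: "1 \<le> s" "s \<le> k"
  shows "winch k m s (sweep_state k m y (Suc s)) = sweep_state k m y s"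
proof -
  let ?Z = "sweep_state k m y (Suc s)"
  have lZ: "length ?Z = k" by (simp add: sweep_state_def)
  have e1: "entry k m ?Z s = y!(s-1)" using s by (simp add: entry_def sweep_state_def)
  have e0: "entry k m ?Z (s-1) = entry k m y (s-1)" using s by (simp add: entry_def sweep_state_def)
  note key = sweep_new_value[OF y s]
  show ?thesis
  proof (rule nth_equalityI)
    fix p assume "p < length (winch k m s ?Z)"
    then have p: "p < k" by (simp add: sweep_state_def)
    show "winch k m s ?Z ! p = sweep_state k m y s ! p"
    proof (cases "p = s - 1")
      case True
      have "winch k m s ?Z ! p = (if entry k m ?Z s + 1 < entry k m ?Z (s + 1)
                  then entry k m ?Z s + 1 else entry k m ?Z (s - 1) + 1)"
        using True lZ s by (simp add: winch_def)
      also have "\<dots> = rotated_entry k m y (s-1)" unfolding Suc_eq_plus1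
        by (simp only: key[unfolded Suc_eq_plus1] e1[unfolded Suc_eq_plus1] e0[unfolded Suc_eq_plus1])
      finally show ?thesis using True s p by (simp add: sweep_state_def)
    next
      case False
      have "winch k m s ?Z ! (Suc p - 1) = ?Z ! (Suc p - 1)"
        by (rule winch_nth_other) (use False s in auto)
      moreover have "(p < s) = (Suc p < s)" using False by auto
      ultimately show ?thesis using p by (simp add: sweep_state_def)
    qed
  qed (simp add: sweep_state_def)
qed

lemma winch_sweep:
  assumes y: "y \<in> S k m"
  shows "d \<le> k \<Longrightarrow> winch_word k m (rev [k+1-d..<k+1]) y = sweep_state k m y (k+1-d)"
proof (induction d)
  case 0
  have "sweep_state k m y (k+1) = y" using S_nthD(1)[OF y]
    by (intro nth_equalityI) (auto simp: sweep_state_def)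
  then show ?case by (simp add: winch_word_def)
next
  case (Suc d)
  define s where "s = k - d"
  have s: "1 \<le> s" "s \<le> k" "k + 1 - Suc d = s" "k+1-d = Suc s" using Suc.prems by (auto simp: s_def)
  have "[s..<k+1] = s # [Suc s..<k+1]" using s by (simp add: upt_rec)
  then have "winch_word k m (rev [s..<k+1]) y = winch k m s (winch_word k m (rev [Suc s..<k+1]) y)"
    by (simp add: winch_word_snoc)
  also have "\<dots> = winch k m s (sweep_state k m y (Suc s))"
    using Suc.IH[OF Suc_leD[OF Suc.prems]] unfolding s(4) by simp
  also have "\<dots> = sweep_state k m y s" by (rule winch_sweep_step[OF y s(1,2)])
  finally show ?case using s by simp
qed

text \<open>The rotated entries form the rotated set: without wrap-around every entry moves up by one;
  with x_k = m the entries also shift cyclically by one place.\<close>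
lemma rotated_entry_image:
  assumes y: "y \<in> S k m" and k: "1 \<le> k"
  shows "rotated_entry k m y ` {..<k} = (\<lambda>p. y!p mod m + 1) ` {..<k}"
proof -
  note F = S_nthD[OF y]
  have top: "y!(k-1) \<le> m" using F(3)[of "k-1"] k by auto
  show ?thesis
  proof (cases "y!(k-1) < m")
    case True
    have "y!p mod m + 1 = rotated_entry k m y p" if "p < k" for p
    proof -
      have "p = k-1 \<or> p < k-1" using that by auto
      then have "y!p \<le> y!(k-1)" using F(2)[of p "k-1"] k by auto
      then show ?thesis using True by (simp add: rotated_entry_def)
    qed
    then show ?thesis by (metis (no_types, lifting) image_cong lessThan_iff)
  next
    case False
    then have ym: "y!(k-1) = m" using top by auto
    define \<sigma> where "\<sigma> p = (if p = 0 then k-1 else p-1)" for p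
    have f: "rotated_entry k m y p = y!(\<sigma> p) mod m + 1" if "p < k" for p
    proof (cases "p = 0")
      case False
      then have "y!(p-1) < y!(k-1)" using F(2)[of "p-1" "k-1"] that by auto
      then show ?thesis using ym False that by (simp add: rotated_entry_def \<sigma>_def entry_def)
    qed (use ym in \<open>simp add: rotated_entry_def \<sigma>_def\<close>)
    have "\<sigma> ` {..<k} = {..<k}"
    proof
      show "{..<k} \<subseteq> \<sigma> ` {..<k}"
      proof
        fix q assume q: "q \<in> {..<k}"
        show "q \<in> \<sigma> ` {..<k}"
        proof (cases "q = k - 1")
          case True then have "\<sigma> 0 = q" by (simp add: \<sigma>_def)
          then show ?thesis using k by force
        next
          case False then have "\<sigma> (Suc q) = q" "Suc q < k" using q by (auto simp: \<sigma>_def)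
          then show ?thesis by force
        qed
      qed
    qed (use k in \<open>auto simp: \<sigma>_def\<close>)
    moreover have "rotated_entry k m y ` {..<k} = (\<lambda>p. y!p mod m + 1) ` (\<sigma> ` {..<k})"
      using f by (auto simp: image_iff)
    ultimately show ?thesis by simp
  qed
qed

lemma set_winch_desc:
  assumes y: "y \<in> S k m" and k: "1 \<le> k"
  shows "set (winch_desc k m y) = rot m (set y)"
proof -
  have "winch_desc k m y = sweep_state k m y 1" using winch_sweep[OF y, of k] by (simp add: winch_desc_def)
  then have "set (winch_desc k m y) = rotated_entry k m y ` {..<k}"
    by (auto simp: sweep_state_def)
  moreover have "rot m (set y) = (\<lambda>p. y!p mod m + 1) ` {..<k}"
    unfolding rot_def using S_nthD(1)[OF y] by (auto simp: set_conv_nth)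
  ultimately show ?thesis using rotated_entry_image[OF y k] by simp
qed

lemma winch_desc_in_S: "y \<in> S k m \<Longrightarrow> winch_desc k m y \<in> S k m"
  unfolding winch_desc_def by (rule winch_word_in_S) auto

lemma winch_desc_funpow:
  assumes "y \<in> S k m" "1 \<le> k"
  shows "(winch_desc k m ^^ t) y \<in> S k m \<and> set ((winch_desc k m ^^ t) y) = (rot m ^^ t) (set y)"
proof (induction t)
  case (Suc t) then show ?case using winch_desc_in_S set_winch_desc assms by simp
qed (simp add: assms)

lemma winch_desc_period:
  assumes "y \<in> S k m" "1 \<le> k" "0 < m"
  shows "(winch_desc k m ^^ m) y = y"
  using winch_desc_funpow[OF assms(1,2), of m] rot_funpow_period[OF assms(3) S_set(1)[OF assms(1)]]
    S_eq_if_set_eq assms(1) by metis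

lemma similar_desc:
  assumes "1 \<le> k" "0 < m" "distinct L" "set L = {1..k}"
  shows "similar_word k m (winch_desc k m) L"
proof (rule similar_word_all[OF _ _ _ assms(3,4)])
  show "similar_word k m (winch_desc k m) (rev [1..<k+1])"
    unfolding similar_word_def by (intro exI[of _ id]) (auto simp: winch_desc_def)
qed (use assms winch_desc_in_S winch_desc_period in auto)

section \<open>Counting along a rotation orbit\<close>

lemma flow_balance:
  fixes N :: "nat \<Rightarrow> nat" and enter leave :: "nat \<Rightarrow> bool"
  assumes flow: "\<And>t. N (Suc t) + of_bool (leave t) = N t + of_bool (enter t)"
    and per: "N m = N 0"
  shows "(\<Sum>t<m. of_bool (enter t \<and> N (Suc t) = i) :: real) = (\<Sum>t<m. of_bool (leave t \<and> N t = i))"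
proof -
  have step: "(of_bool (enter t \<and> N (Suc t) = i) - of_bool (leave t \<and> N t = i) :: real)
      = of_bool (i \<le> N (Suc t)) - of_bool (i \<le> N t)" for t
    using flow[of t] by (cases "enter t"; cases "leave t") auto
  have "(\<Sum>t<m. of_bool (enter t \<and> N (Suc t) = i) :: real) - (\<Sum>t<m. of_bool (leave t \<and> N t = i))
      = (\<Sum>t<m. of_bool (enter t \<and> N (Suc t) = i) - of_bool (leave t \<and> N t = i) :: real)"
    by (simp only: sum_subtractf)
  also have "\<dots> = (\<Sum>t<m. of_bool (i \<le> N (Suc t)) - of_bool (i \<le> N t) :: real)"
    by (rule sum.cong[OF refl]) (rule step)
  also have "\<dots> = of_bool (i \<le> N m) - of_bool (i \<le> N 0)" by (rule sum_lessThan_telescope)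
  finally show ?thesis using per by simp
qed

context
  fixes m :: nat and A :: "nat set"
  assumes m: "0 < m" and A: "A \<subseteq> {1..m}"
begin

abbreviation At :: "nat \<Rightarrow> nat set" where "At t \<equiv> (rot m ^^ t) A"

lemma At_subset: "At t \<subseteq> {1..m}" using rot_funpow_subset[OF m A] .

lemma At_finite: "finite (At t)" using At_subset finite_subset by blast

lemma At_period: "At (t + m) = At t"
  using rot_funpow_period[OF m A] by (simp add: funpow_add)

lemma At_shift: "1 \<le> v \<Longrightarrow> v + s \<le> m \<Longrightarrow> (v + s \<in> At (t + s) \<longleftrightarrow> v \<in> At t)"
  using rot_funpow_shift[OF m A] by blast

text \<open>Every position of {1..m} is occupied card A times during m steps: the occupancy counts
  of v and v+1 agree by a time shift, and they sum to m * card A.\<close>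
lemma occupancy_count:
  assumes v: "v \<in> {1..m}" shows "(\<Sum>t<m. of_bool (v \<in> At t) :: real) = card A"
proof -
  define c where "c v = (\<Sum>t<m. of_bool (v \<in> At t) :: real)" for v
  have step: "c (Suc v) = c v" if "1 \<le> v" "Suc v \<le> m" for v
  proof -
    have "c (Suc v) = (\<Sum>t<m. of_bool (Suc v \<in> At (t + 1)) :: real)"
      unfolding c_def by (rule sum_shift_periodic[symmetric]) (simp add: At_period)
    also have "\<dots> = c v" unfolding c_def using At_shift[of v 1] that by simp
    finally show ?thesis .
  qed
  have all: "c v = c 1" if "v \<in> {1..m}" for v
    using that
  proof (induction v)
    case (Suc v) then show ?case using step[of v] by (cases "v = 0") auto
  qed simp
  have "(\<Sum>v\<in>{1..m}. c v) = (\<Sum>t<m. \<Sum>v\<in>{1..m}. of_bool (v \<in> At t) :: real)"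
    unfolding c_def by (rule sum.swap)
  also have "\<dots> = (\<Sum>t<m. real (card (At t)))"
    using At_subset by (simp add: Int_absorb1 Int_def[symmetric])
  also have "\<dots> = m * card A" using card_rot_funpow[OF m A] by simp
  finally have "(\<Sum>v\<in>{1..m}. c v) = m * card A" .
  moreover have "(\<Sum>v\<in>{1..m}. c v) = (\<Sum>v\<in>{1..m}. c 1)" by (rule sum.cong[OF refl all])
  ultimately have "c 1 = card A" using m by simp
  then show ?thesis using all[OF v] by (simp add: c_def)
qed

definition window_count :: "nat \<Rightarrow> nat \<Rightarrow> nat \<Rightarrow> nat" where
  "window_count t a b = card {v\<in>At t. a \<le> v \<and> v \<le> b}"

lemma window_count_period: "window_count (t + m) a b = window_count t a b"
  unfolding window_count_def using At_period by simp

lemma window_count_shift: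
  assumes "1 \<le> a" "b + s \<le> m"
  shows "window_count (t + s) (a + s) (b + s) = window_count t a b"
proof -
  have "{v\<in>At (t+s). a + s \<le> v \<and> v \<le> b + s} = (\<lambda>v. v + s) ` {v\<in>At t. a \<le> v \<and> v \<le> b}"
  proof
    show "{v\<in>At (t+s). a + s \<le> v \<and> v \<le> b + s} \<subseteq> (\<lambda>v. v + s) ` {v\<in>At t. a \<le> v \<and> v \<le> b}"
    proof
      fix w assume w: "w \<in> {v\<in>At (t+s). a + s \<le> v \<and> v \<le> b + s}"
      then have "(w - s) + s \<in> At (t + s)" by auto
      then have "w - s \<in> At t" using At_shift[of "w - s" s t] w assms by auto
      then show "w \<in> (\<lambda>v. v + s) ` {v\<in>At t. a \<le> v \<and> v \<le> b}"
        using w by (auto intro!: image_eqI[of _ _ "w - s"])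
    qed
  qed (use At_shift assms in auto)
  moreover have "inj (\<lambda>v::nat. v + s)" by (auto simp: inj_def)
  ultimately show ?thesis unfolding window_count_def by (simp add: card_image inj_on_subset)
qed

lemma window_count_concat:
  assumes "a \<le> b + 1" "b \<le> c"
  shows "window_count t a c = window_count t a b + window_count t (b+1) c"
proof -
  have "{v\<in>At t. a \<le> v \<and> v \<le> c} = {v\<in>At t. a \<le> v \<and> v \<le> b} \<union> {v\<in>At t. b + 1 \<le> v \<and> v \<le> c}"
    using assms by auto
  moreover have "finite {v\<in>At t. a \<le> v \<and> v \<le> b}" "finite {v\<in>At t. b + 1 \<le> v \<and> v \<le> c}"
    using At_finite by auto
  ultimately show ?thesis unfolding window_count_def by (simp add: card_Un_disjoint disjoint_iff)
qed

lemma window_count_single: "window_count t a a = of_bool (a \<in> At t)"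
proof -
  have "{v\<in>At t. a \<le> v \<and> v \<le> a} = (if a \<in> At t then {a} else {})" by auto
  then show ?thesis unfolding window_count_def by simp
qed

lemma window_count_full: "window_count t 1 m = card A"
proof -
  have "{v\<in>At t. 1 \<le> v \<and> v \<le> m} = At t" using At_subset[of t] by auto
  then show ?thesis unfolding window_count_def using card_rot_funpow[OF m A] by simp
qed

lemma card_le_window_count: "card {v\<in>At t. v \<le> j} = window_count t 1 j"
proof -
  have "{v\<in>At t. v \<le> j} = {v\<in>At t. 1 \<le> v \<and> v \<le> j}" using At_subset[of t] by auto
  then show ?thesis unfolding window_count_def by simp
qed

lemma window_flow:
  assumes "2 \<le> j" "j \<le> m"
  shows "window_count (Suc t) j m + of_bool (m \<in> At t) = window_count t j m + of_bool (j - 1 \<in> At t)"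
proof -
  have "window_count (Suc t) j m = window_count (t + 1) ((j - 1) + 1) ((m - 1) + 1)"
    using assms by simp
  also have "\<dots> = window_count t (j - 1) (m - 1)" by (rule window_count_shift) (use assms in auto)
  finally have shifted: "window_count (Suc t) j m = window_count t (j - 1) (m - 1)" .
  have "window_count t (j - 1) m = window_count t (j - 1) (m - 1) + window_count t m m"
    using window_count_concat[of "j - 1" "m - 1" m t] assms by simp
  moreover have "window_count t (j - 1) m = window_count t (j - 1) (j - 1) + window_count t j m"
    using window_count_concat[of "j - 1" "j - 1" m t] assms by simp
  ultimately show ?thesis using shifted by (simp add: window_count_single)
qed

lemma exit_entry_balance:
  assumes j: "1 \<le> j" "j \<le> m"
  shows "(\<Sum>t<m. of_bool (m \<in> At t \<and> window_count t j m = i) :: real)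
       = (\<Sum>t<m. of_bool (j \<in> At t \<and> window_count t j m = i))"
proof (cases "j = 1")
  case j1: True
  then have full: "window_count t j m = card A" for t using window_count_full by simp
  show ?thesis
  proof (cases "card A = i")
    case True
    have "(\<Sum>t<m. of_bool (m \<in> At t \<and> window_count t j m = i) :: real) = (\<Sum>t<m. of_bool (m \<in> At t))"
      by (rule sum.cong[OF refl]) (simp add: full True)
    also have "\<dots> = card A" by (rule occupancy_count) (use m in auto)
    also have "\<dots> = (\<Sum>t<m. of_bool (1 \<in> At t))" by (rule occupancy_count[symmetric]) (use m in auto)
    also have "\<dots> = (\<Sum>t<m. of_bool (j \<in> At t \<and> window_count t j m = i))"
      by (rule sum.cong[OF refl]) (use full True j1 in simp)
    finally show ?thesis .
  qed (simp add: full)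
next
  case False
  define N where "N t = window_count t j m" for t
  have "(\<Sum>t<m. of_bool (j \<in> At t \<and> N t = i) :: real)
      = (\<Sum>t<m. of_bool (j \<in> At (Suc t) \<and> N (Suc t) = i))"
    by (rule sum_shift_periodic1[symmetric])
      (use At_period[of 0] window_count_period[of 0] in \<open>simp add: N_def\<close>)
  also have "\<dots> = (\<Sum>t<m. of_bool (j - 1 \<in> At t \<and> N (Suc t) = i))"
    using At_shift[of "j - 1" 1] j False by simp
  also have "\<dots> = (\<Sum>t<m. of_bool (m \<in> At t \<and> N t = i))"
  proof (rule flow_balance)
    show "N (Suc t) + of_bool (m \<in> At t) = N t + of_bool (j - 1 \<in> At t)" for t
      unfolding N_def by (rule window_flow) (use j False in auto)
  qed (use window_count_period[of 0] in \<open>simp add: N_def\<close>)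
  finally show ?thesis by (simp add: N_def)
qed

text \<open>Shifting time by m-j moves position j to m: "the i-th element sits at j" becomes
  "m is occupied and the window [m+1-j, m] contains i elements".\<close>
lemma rank_to_top:
  assumes j: "1 \<le> j" "j \<le> m"
  shows "(\<Sum>t<m. of_bool (j \<in> At t \<and> card {v\<in>At t. v \<le> j} = i) :: real)
       = (\<Sum>t<m. of_bool (m \<in> At t \<and> window_count t (m+1-j) m = i))"
proof -
  define H where "H t = (of_bool (m \<in> At t \<and> window_count t (m+1-j) m = i) :: real)" for t
  have "of_bool (j \<in> At t \<and> card {v\<in>At t. v \<le> j} = i) = H (t + (m - j))" for t
  proof -
    have "m \<in> At (t + (m - j)) \<longleftrightarrow> j \<in> At t" using At_shift[of j "m - j" t] j by simp
    moreover have "window_count (t + (m - j)) (m + 1 - j) m = window_count t 1 j"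
      using window_count_shift[of 1 j "m - j" t] j by (simp add: Suc_diff_le)
    ultimately show ?thesis unfolding H_def using card_le_window_count[of t j] by simp
  qed
  then have "(\<Sum>t<m. of_bool (j \<in> At t \<and> card {v\<in>At t. v \<le> j} = i) :: real) = (\<Sum>t<m. H (t + (m - j)))"
    by simp
  also have "\<dots> = (\<Sum>t<m. H t)"
    by (rule sum_shift_periodic) (simp add: H_def At_period window_count_period)
  finally show ?thesis by (simp add: H_def)
qed

lemma rank_complement:
  assumes i: "1 \<le> i" "i \<le> card A" and j: "1 \<le> j" "j \<le> m"
  shows "(j \<in> At t \<and> card {v\<in>At t. v \<le> j} = card A + 1 - i) \<longleftrightarrow> (j \<in> At t \<and> window_count t j m = i)"
proof -
  have "window_count t 1 m = window_count t 1 j + window_count t (j+1) m"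
    by (rule window_count_concat) (use j in auto)
  moreover have "window_count t j m = window_count t j j + window_count t (j+1) m"
    by (rule window_count_concat) (use j in auto)
  ultimately show ?thesis
    using window_count_full[of t] window_count_single[of t j] card_le_window_count[of t j] i by auto
qed

text \<open>The rotation form of the 0-mesy of d_(i,j): position j holds the i-th element as often as
  position m+1-j holds the (card A + 1 - i)-th.\<close>
lemma rank_symmetry:
  assumes i: "1 \<le> i" "i \<le> card A" and j: "1 \<le> j" "j \<le> m"
  shows "(\<Sum>t<m. of_bool (j \<in> At t \<and> card {v\<in>At t. v \<le> j} = i) :: real)
       = (\<Sum>t<m. of_bool (m+1-j \<in> At t \<and> card {v\<in>At t. v \<le> m+1-j} = card A + 1 - i))"
proof -
  have j': "1 \<le> m + 1 - j" "m + 1 - j \<le> m" using j by auto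
  show ?thesis
    unfolding rank_to_top[OF j] exit_entry_balance[OF j'] rank_complement[OF i j']
    by simp
qed

end

section \<open>Orbit averages for maps of period m\<close>

lemma orbit_eq_image_period:
  assumes m: "0 < m" and x: "(F ^^ m) x = x"
  shows "orbit F x = (\<lambda>t. (F ^^ t) x) ` {..<m}"
proof
  show "orbit F x \<subseteq> (\<lambda>t. (F ^^ t) x) ` {..<m}"
  proof
    fix y assume "y \<in> orbit F x"
    then obtain n where "y = (F ^^ n) x" by (auto simp: orbit_def)
    then have "y = (F ^^ (n mod m)) x" using funpow_mod_eq[OF x, of n] by simp
    then show "y \<in> (\<lambda>t. (F ^^ t) x) ` {..<m}" using m by auto
  qed
qed (auto simp: orbit_def)

definition visits :: "('a \<Rightarrow> 'a) \<Rightarrow> nat \<Rightarrow> 'a \<Rightarrow> 'a \<Rightarrow> nat" where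
  "visits F m x y = card {t\<in>{..<m}. (F ^^ t) x = y}"

text \<open>If s steps lead from a to b, shifting times by s (mod m) injects visits of a into visits of b.\<close>
lemma visits_shift_le:
  assumes m: "0 < m" and x: "(F ^^ m) x = x" and s: "s < m"
    and P: "\<And>t. (F ^^ t) x = a \<Longrightarrow> (F ^^ (t + s)) x = b"
  shows "visits F m x a \<le> visits F m x b"
  unfolding visits_def
proof (rule card_inj_on_le)
  let ?\<phi> = "\<lambda>t. (t + s) mod m"
  show "inj_on ?\<phi> {t\<in>{..<m}. (F ^^ t) x = a}"
  proof (rule inj_on_inverseI)
    fix t assume "t \<in> {t\<in>{..<m}. (F ^^ t) x = a}"
    then have t: "t < m" by auto
    have "((t + s) mod m + (m - s)) mod m = (t + s + (m - s)) mod m" by (simp add: mod_add_left_eq)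
    also have "\<dots> = t" using s t by simp
    finally show "((t + s) mod m + (m - s)) mod m = t" .
  qed
  show "?\<phi> ` {t\<in>{..<m}. (F ^^ t) x = a} \<subseteq> {t\<in>{..<m}. (F ^^ t) x = b}"
  proof
    fix u assume "u \<in> ?\<phi> ` {t\<in>{..<m}. (F ^^ t) x = a}"
    then obtain t where t: "t < m" "(F ^^ t) x = a" "u = (t + s) mod m" by auto
    have "(F ^^ u) x = (F ^^ (t + s)) x" using t funpow_mod_eq[OF x, of "t+s"] by simp
    then show "u \<in> {t\<in>{..<m}. (F ^^ t) x = b}" using P[OF t(2)] t m by simp
  qed
qed simp

lemma visits_orbit_eq:
  assumes m: "0 < m" and x: "(F ^^ m) x = x" and s: "s < m"
  shows "visits F m x ((F ^^ s) x) = visits F m x x"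
proof (rule antisym)
  show "visits F m x x \<le> visits F m x ((F ^^ s) x)"
    by (rule visits_shift_le[OF m x s]) (simp add: funpow_add add.commute[of _ s])
  show "visits F m x ((F ^^ s) x) \<le> visits F m x x"
  proof (cases "s = 0")
    case False
    show ?thesis
    proof (rule visits_shift_le[OF m x, of "m - s"])
      fix t assume t: "(F ^^ t) x = (F ^^ s) x"
      have "(F ^^ (t + (m - s))) x = (F ^^ (m - s)) ((F ^^ t) x)"
        by (simp add: funpow_add add.commute[of t])
      also have "\<dots> = (F ^^ ((m - s) + s)) x" using t by (simp only: funpow_add comp_apply)
      finally show "(F ^^ (t + (m - s))) x = x" using x s by simp
    qed (use s False in auto)
  qed simp
qed

lemma orbit_avg_period:
  assumes m: "0 < m" and x: "(F ^^ m) x = x"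
  shows "orbit_avg F g x = period_sum m F g x / m"
proof -
  define Orb where "Orb = orbit F x"
  have Orb: "Orb = (\<lambda>t. (F ^^ t) x) ` {..<m}" using orbit_eq_image_period[OF m x] Orb_def by simp
  have sums: "period_sum m F h x = visits F m x x * (\<Sum>y\<in>Orb. h y)" for h :: "'a \<Rightarrow> real"
  proof -
    have "period_sum m F h x = (\<Sum>y\<in>Orb. \<Sum>t\<in>{t\<in>{..<m}. (F ^^ t) x = y}. h ((F ^^ t) x))"
      unfolding period_sum_def Orb by (rule sum.image_gen) simp
    also have "\<dots> = (\<Sum>y\<in>Orb. visits F m x y * h y)" unfolding visits_def by (rule sum.cong) auto
    also have "\<dots> = (\<Sum>y\<in>Orb. visits F m x x * h y)"
      by (rule sum.cong[OF refl]) (auto simp: Orb visits_orbit_eq[OF m x])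
    finally show ?thesis by (simp add: sum_distrib_left)
  qed
  have "real m = visits F m x x * real (card Orb)" using sums[of "\<lambda>_. 1"] by (simp add: period_sum_def)
  then have nz: "real (visits F m x x) \<noteq> 0" "real (card Orb) \<noteq> 0"
    using m by (metis mult_eq_0_iff of_nat_0_less_iff less_irrefl)+
  have "orbit_avg F g x = (\<Sum>y\<in>Orb. g y) / card Orb" by (simp add: orbit_avg_def Orb_def)
  also have "\<dots> = (visits F m x x * (\<Sum>y\<in>Orb. g y)) / (visits F m x x * card Orb)" using nz by simp
  also have "\<dots> = period_sum m F g x / m" using sums[of g] \<open>real m = _\<close> by simp
  finally show ?thesis .
qed

lemma homomesic_with_period_sum:
  assumes "0 < m" "\<And>x. x \<in> X \<Longrightarrow> (F ^^ m) x = x" "\<And>x. x \<in> X \<Longrightarrow> period_sum m F g x = c"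
  shows "homomesic_with X F g (c / m)"
  unfolding homomesic_with_def
proof
  fix x assume "x \<in> X"
  then show "orbit_avg F g x = c / m" using orbit_avg_period[OF assms(1) assms(2)] assms(3) by simp
qed

lemma orbit_conj:
  assumes fX: "\<And>y. y \<in> X \<Longrightarrow> f y \<in> X" and c: "\<And>y. y \<in> X \<Longrightarrow> \<phi> (f y) = g (\<phi> y)"
    and y: "y \<in> X"
  shows "orbit g (\<phi> y) = \<phi> ` orbit f y"
proof -
  have pw: "\<phi> ((f ^^ n) y) = (g ^^ n) (\<phi> y)" for n
  proof (induction n)
    case (Suc n)
    have "(f ^^ n) y \<in> X" by (rule funpow_in) (use fX y in auto)
    then show ?case using Suc c by simp
  qed simp
  show ?thesis
  proof
    show "orbit g (\<phi> y) \<subseteq> \<phi> ` orbit f y"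
    proof
      fix z assume "z \<in> orbit g (\<phi> y)"
      then obtain n where "z = (g ^^ n) (\<phi> y)" by (auto simp: orbit_def)
      then have "z = \<phi> ((f ^^ n) y)" using pw by simp
      then show "z \<in> \<phi> ` orbit f y" by (auto simp: orbit_def)
    qed
  qed (use pw in \<open>auto simp: orbit_def\<close>)
qed

lemma orbit_structure_conj:
  assumes b: "bij_betw \<phi> X Y" and fX: "\<And>y. y \<in> X \<Longrightarrow> f y \<in> X"
    and c: "\<And>y. y \<in> X \<Longrightarrow> \<phi> (f y) = g (\<phi> y)"
  shows "orbit_structure f X = orbit_structure g Y"
proof -
  have orb: "orbit g (\<phi> y) = \<phi> ` orbit f y" if "y \<in> X" for y
    by (rule orbit_conj[of X f \<phi> g, OF fX c that])
  have osub: "orbit f y \<subseteq> X" if "y \<in> X" for y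
    unfolding orbit_def using funpow_in[of X f, OF fX that] by auto
  have Y: "Y = \<phi> ` X" and inj: "inj_on \<phi> X" using b by (simp_all add: bij_betw_def)
  have e1: "orbit g ` Y = (\<lambda>Z. \<phi> ` Z) ` (orbit f ` X)"
    unfolding Y using orb by (auto simp: image_iff)
  have inj2: "inj_on (\<lambda>Z. \<phi> ` Z) (orbit f ` X)"
  proof (rule inj_onI)
    fix Z Z' assume "Z \<in> orbit f ` X" "Z' \<in> orbit f ` X" "\<phi> ` Z = \<phi> ` Z'"
    then show "Z = Z'" using inj_on_image_eq_iff[OF inj] osub by auto
  qed
  have "orbit_structure g Y = image_mset card (mset_set ((\<lambda>Z. \<phi> ` Z) ` (orbit f ` X)))"
    unfolding orbit_structure_def e1 ..
  also have "\<dots> = image_mset card (image_mset (\<lambda>Z. \<phi> ` Z) (mset_set (orbit f ` X)))"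
    by (simp add: image_mset_mset_set[OF inj2])
  also have "\<dots> = image_mset (\<lambda>Z. card (\<phi> ` Z)) (mset_set (orbit f ` X))"
    by (simp add: multiset.map_comp comp_def)
  also have "\<dots> = image_mset card (mset_set (orbit f ` X))"
  proof (rule image_mset_cong)
    fix Z assume "Z \<in># mset_set (orbit f ` X)"
    then have "Z \<in> orbit f ` X" by (cases "finite (orbit f ` X)") auto
    then have "Z \<subseteq> X" using osub by auto
    then show "card (\<phi> ` Z) = card Z" using inj by (meson card_image inj_on_subset)
  qed
  finally show ?thesis by (simp add: orbit_structure_def)
qed

lemma permutation_word:
  assumes "\<nu> permutes {1..k}"
  shows "distinct (map \<nu> [1..<k+1])" "set (map \<nu> [1..<k+1]) = {1..k}"
proof -
  have "set [1..<k+1] = {1..k}" by auto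
  then show "distinct (map \<nu> [1..<k+1])" "set (map \<nu> [1..<k+1]) = {1..k}"
    using permutes_inj_on[OF assms] permutes_image[OF assms] by (simp_all add: distinct_map)
qed

lemma winch_perm_in_S:
  assumes "\<nu> permutes {1..k}" "y \<in> S k m" shows "winch_perm k m \<nu> y \<in> S k m"
proof -
  have "set (map \<nu> [1..<k+1]) \<subseteq> {1..k}" using permutation_word(2)[OF assms(1)] by simp
  then show ?thesis unfolding winch_perm_eq_word using assms(2) by (rule winch_word_in_S)
qed

lemma winch_perm_conj_desc:
  assumes k: "1 \<le> k" and m: "0 < m" and \<nu>: "\<nu> permutes {1..k}"
  obtains h where "bij_betw h (S k m) (S k m)"
    "\<And>y. y \<in> S k m \<Longrightarrow> h (winch_perm k m \<nu> y) = winch_desc k m (h y)"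
    "\<And>y i j. y \<in> S k m \<Longrightarrow> i \<in> {1..k} \<Longrightarrow>
       period_sum m (winch_perm k m \<nu>) (gfun i j) y = period_sum m (winch_desc k m) (gfun i j) (h y)"
proof -
  have "similar_word k m (winch_desc k m) (map \<nu> [1..<k+1])"
    using similar_desc[OF k m] permutation_word[OF \<nu>] by simp
  then show ?thesis using that unfolding similar_word_def winch_perm_eq_word by blast
qed

lemma winch_perm_period:
  assumes "1 \<le> k" "0 < m" "\<nu> permutes {1..k}" "y \<in> S k m"
  shows "(winch_perm k m \<nu> ^^ m) y = y"
  unfolding winch_perm_eq_word
proof (rule similar_word_period[where G = "winch_desc k m"])
  show "similar_word k m (winch_desc k m) (map \<nu> [1..<k+1])"
    using similar_desc assms permutation_word[OF assms(3)] by simp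
qed (use assms winch_desc_in_S winch_desc_period permutation_word[OF assms(3)] in auto)

lemma winch_perm_orbit_structure:
  assumes "1 \<le> k" "0 < m" "\<nu> permutes {1..k}"
  shows "orbit_structure (winch_perm k m \<nu>) (S k m)
       = orbit_structure (rot m) {A. A \<subseteq> {1..m} \<and> card A = k}"
proof -
  obtain h where h: "bij_betw h (S k m) (S k m)"
    "\<And>y. y \<in> S k m \<Longrightarrow> h (winch_perm k m \<nu> y) = winch_desc k m (h y)"
    using winch_perm_conj_desc[OF assms] by metis
  have hS: "h y \<in> S k m" if "y \<in> S k m" for y using h(1) that by (auto simp: bij_betw_def)
  show ?thesis
  proof (rule orbit_structure_conj)
    show "bij_betw (set \<circ> h) (S k m) {A. A \<subseteq> {1..m} \<and> card A = k}"
      using bij_betw_trans[OF h(1) bij_betw_set_S] .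
    show "(set \<circ> h) (winch_perm k m \<nu> y) = rot m ((set \<circ> h) y)" if "y \<in> S k m" for y
      using h(2)[OF that] set_winch_desc[OF hS[OF that] assms(1)] by simp
  qed (use winch_perm_in_S[OF assms(3)] in blast)
qed

lemma period_sum_desc_gfun:
  assumes z: "z \<in> S k m" and k: "1 \<le> k" and i: "i \<in> {1..k}"
  shows "period_sum m (winch_desc k m) (gfun i j) z
       = (\<Sum>t<m. of_bool (j \<in> (rot m ^^ t) (set z) \<and> card {v\<in>(rot m ^^ t) (set z). v \<le> j} = i))"
  unfolding period_sum_def
proof (rule sum.cong[OF refl])
  fix t
  have "((winch_desc k m ^^ t) z ! (i - 1) = j)
      \<longleftrightarrow> (j \<in> set ((winch_desc k m ^^ t) z) \<and> card {v\<in>set ((winch_desc k m ^^ t) z). v \<le> j} = i)"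
    by (rule S_nth_eq_iff_rank) (use winch_desc_funpow[OF z k] i in auto)
  then show "gfun i j ((winch_desc k m ^^ t) z)
      = of_bool (j \<in> (rot m ^^ t) (set z) \<and> card {v\<in>(rot m ^^ t) (set z). v \<le> j} = i)"
    using winch_desc_funpow[OF z k, of t] by (simp add: gfun_def)
qed

lemma period_sum_ffun:
  assumes "\<And>y. y \<in> S k m \<Longrightarrow> F y \<in> S k m" "y \<in> S k m"
  shows "period_sum m F (ffun j) y = (\<Sum>i\<in>{1..k}. period_sum m F (gfun i j) y)"
proof -
  have "period_sum m F (ffun j) y = period_sum m F (\<lambda>x. \<Sum>i\<in>{1..k}. gfun i j x) y"
    unfolding period_sum_def
    by (rule sum.cong[OF refl], rule ffun_eq_sum_gfun, rule funpow_in[of "S k m" F, OF assms])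
  then show ?thesis by (simp add: period_sum_sum)
qed

lemma period_sum_winch_perm_ffun:
  assumes k: "1 \<le> k" and m: "0 < m" and \<nu>: "\<nu> permutes {1..k}"
    and y: "y \<in> S k m" and j: "j \<in> {1..m}"
  shows "period_sum m (winch_perm k m \<nu>) (ffun j) y = k"
proof -
  obtain h where h: "bij_betw h (S k m) (S k m)"
    "\<And>y i j. y \<in> S k m \<Longrightarrow> i \<in> {1..k} \<Longrightarrow>
       period_sum m (winch_perm k m \<nu>) (gfun i j) y = period_sum m (winch_desc k m) (gfun i j) (h y)"
    using winch_perm_conj_desc[OF k m \<nu>] by metis
  have z: "h y \<in> S k m" using h(1) y by (auto simp: bij_betw_def)
  have "period_sum m (winch_perm k m \<nu>) (ffun j) y = (\<Sum>i\<in>{1..k}. period_sum m (winch_perm k m \<nu>) (gfun i j) y)"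
    by (rule period_sum_ffun[OF winch_perm_in_S[OF \<nu>] y])
  also have "\<dots> = (\<Sum>i\<in>{1..k}. period_sum m (winch_desc k m) (gfun i j) (h y))" using h(2) y by simp
  also have "\<dots> = period_sum m (winch_desc k m) (ffun j) (h y)"
    by (rule period_sum_ffun[OF winch_desc_in_S z, symmetric])
  also have "\<dots> = (\<Sum>t<m. of_bool (j \<in> (rot m ^^ t) (set (h y))))"
    unfolding period_sum_def by (rule sum.cong[OF refl]) (use winch_desc_funpow[OF z k] in \<open>simp add: ffun_def\<close>)
  also have "\<dots> = k" using occupancy_count[OF m S_set(1)[OF z] j] S_set(2)[OF z] by simp
  finally show ?thesis .
qed

lemma period_sum_winch_perm_dfun:
  assumes k: "1 \<le> k" and m: "0 < m" and \<nu>: "\<nu> permutes {1..k}"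
    and y: "y \<in> S k m" and i: "i \<in> {1..k}" and j: "j \<in> {1..m}"
  shows "period_sum m (winch_perm k m \<nu>) (dfun k m i j) y = 0"
proof -
  obtain h where h: "bij_betw h (S k m) (S k m)"
    "\<And>y i j. y \<in> S k m \<Longrightarrow> i \<in> {1..k} \<Longrightarrow>
       period_sum m (winch_perm k m \<nu>) (gfun i j) y = period_sum m (winch_desc k m) (gfun i j) (h y)"
    using winch_perm_conj_desc[OF k m \<nu>] by metis
  have z: "h y \<in> S k m" using h(1) y by (auto simp: bij_betw_def)
  have i': "k + 1 - i \<in> {1..k}" using i by auto
  have "period_sum m (winch_perm k m \<nu>) (dfun k m i j) y
      = period_sum m (winch_desc k m) (gfun i j) (h y)
        - period_sum m (winch_desc k m) (gfun (k + 1 - i) (m + 1 - j)) (h y)"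
    unfolding dfun_def period_sum_diff using h(2)[OF y i] h(2)[OF y i'] by simp
  also have "\<dots> = 0"
    using period_sum_desc_gfun[OF z k i, of j] period_sum_desc_gfun[OF z k i', of "m + 1 - j"]
      rank_symmetry[OF m S_set(1)[OF z], of i j] S_set(2)[OF z] i j by simp
  finally show ?thesis .
qed

theorem mainTheorem5:
  fixes k m :: nat and \<nu> :: "nat \<Rightarrow> nat"
  assumes "1 \<le> k" and "k \<le> m" and "\<nu> permutes {1..k}"
  shows "(\<forall>x\<in>S k m. (winch_perm k m \<nu> ^^ m) x = x)
    \<and> orbit_structure (winch_perm k m \<nu>) (S k m)
        = orbit_structure (rot m) {A. A \<subseteq> {1..m} \<and> card A = k}
    \<and> (\<forall>i\<in>{1..k}. \<forall>j\<in>{1..m}. homomesic_with (S k m) (winch_perm k m \<nu>) (dfun k m i j) 0)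
    \<and> (\<forall>j\<in>{1..m}. homomesic_with (S k m) (winch_perm k m \<nu>) (ffun j) (real k / real m))
    \<and> (\<forall>(a :: nat \<Rightarrow> nat \<Rightarrow> real) (b :: nat \<Rightarrow> real).
         homomesic (S k m) (winch_perm k m \<nu>)
           (\<lambda>x. (\<Sum>i\<in>{1..k}. \<Sum>j\<in>{1..m}. a i j * dfun k m i j x) + (\<Sum>j\<in>{1..m}. b j * ffun j x)))"
proof -
  let ?W = "winch_perm k m \<nu>"
  have k: "1 \<le> k" and m: "0 < m" and \<nu>: "\<nu> permutes {1..k}" using assms by auto
  note period = winch_perm_period[OF k m \<nu>]
  note d_sum = period_sum_winch_perm_dfun[OF k m \<nu>] and f_sum = period_sum_winch_perm_ffun[OF k m \<nu>]
  have combination: "homomesic (S k m) ?W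
      (\<lambda>x. (\<Sum>i\<in>{1..k}. \<Sum>j\<in>{1..m}. a i j * dfun k m i j x) + (\<Sum>j\<in>{1..m}. b j * ffun j x))"
    for a b
  proof -
    have "period_sum m ?W (\<lambda>x. (\<Sum>i\<in>{1..k}. \<Sum>j\<in>{1..m}. a i j * dfun k m i j x)
        + (\<Sum>j\<in>{1..m}. b j * ffun j x)) x = (\<Sum>j\<in>{1..m}. b j * k)" if "x \<in> S k m" for x
      using d_sum[OF that] f_sum[OF that] by (simp add: period_sum_add period_sum_sum period_sum_mult)
    then show ?thesis unfolding homomesic_def using homomesic_with_period_sum[OF m period] by blast
  qed
  have "homomesic_with (S k m) ?W (dfun k m i j) (0 / m)" if "i \<in> {1..k}" "j \<in> {1..m}" for i j
    using homomesic_with_period_sum[OF m period] d_sum that by blast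
  moreover have "homomesic_with (S k m) ?W (ffun j) (k / m)" if "j \<in> {1..m}" for j
    using homomesic_with_period_sum[OF m period] f_sum that by blast
  ultimately show ?thesis
    using period winch_perm_orbit_structure[OF k m \<nu>] combination by simp
qed

end
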